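(* Let $\beta(s)=(x(s),0,z(s))$, $s\in I$, be a smooth curve in the $xz$-plane parametrized by arc length with $x(s)>0$, and let $\Sigma$ be the surface obtained by rotating $\beta$ about the $z$-axis, parametrized by $(s,\theta)\mapsto(x(s)\cos\theta,x(s)\sin\theta,z(s))$, with unit normal $N=(-z'(s)\cos\theta,-z'(s)\sin\theta,x'(s))$. Suppose that for all $s\in I$: (a) $-1\le x''(s)\Big(x(s)-\frac{x'(s)}{z'(s)}z(s)\Big)$ whenever $z'(s)\ne0$; (b) $-1\le z(s)z''(s)$ whenever $z'(s)=0$; (c) $-x(s)x'(s)^2\le z'(s)x'(s)z(s)$. Then at every point of $\Sigma$, $$|\Phi|^2\langle\vec x,N\rangle^2\le\tfrac12\big(2+H\langle\vec x,N\rangle\big)^2,$$ where $H$ and $\Phi$ are the (pointwise) mean curvature and traceless second fundamental form of $\Sigma$ with respect to $N$.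
   Context: Conventions: $\vec x$ is the position vector; shape operator $A$ with respect to $N$ defined by $\langle A(Y),Z\rangle=\langle\bar\nabla_YZ,N\rangle$; principal curvatures $k_1,k_2$ its eigenvalues; $H=k_1+k_2$ (unnormalized); $\Phi=\Pi-\frac H2 g_\Sigma$ with $\Pi(X,Y)=g_\Sigma(AX,Y)$, so $|\Phi|^2=|A|^2-H^2/2$. For this surface of revolution, $\langle\vec x,N\rangle=x'z-xz'$, the principal curvatures are $x'z''-x''z'$ (meridian direction) and $z'/x$ (parallel direction). *)

theory Defs
  imports "HOL-Analysis.Analysis"
begin

definition smooth_on :: "real set \<Rightarrow> (real \<Rightarrow> real) \<Rightarrow> bool" where
  "smooth_on S f \<longleftrightarrow> (\<forall>n. \<forall>s\<in>S. ((deriv ^^ n) f) differentiable (at s))"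

definition rev_surf :: "(real \<Rightarrow> real) \<Rightarrow> (real \<Rightarrow> real) \<Rightarrow> real \<Rightarrow> real \<Rightarrow> real \<times> real \<times> real" where
  "rev_surf x z s \<theta> = (x s * cos \<theta>, x s * sin \<theta>, z s)"

definition rev_normal :: "(real \<Rightarrow> real) \<Rightarrow> (real \<Rightarrow> real) \<Rightarrow> real \<Rightarrow> real \<Rightarrow> real \<times> real \<times> real" where
  "rev_normal x z s \<theta> = (- deriv z s * cos \<theta>, - deriv z s * sin \<theta>, deriv x s)"

text \<open>Principal curvatures (meridian and parallel direction) w.r.t. N, as given in the context.\<close>
definition k1 :: "(real \<Rightarrow> real) \<Rightarrow> (real \<Rightarrow> real) \<Rightarrow> real \<Rightarrow> real" where
  "k1 x z s = deriv x s * deriv (deriv z) s - deriv (deriv x) s * deriv z s"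

definition k2 :: "(real \<Rightarrow> real) \<Rightarrow> (real \<Rightarrow> real) \<Rightarrow> real \<Rightarrow> real" where
  "k2 x z s = deriv z s / x s"

text \<open>Unnormalised mean curvature H = k1 + k2, |A|^2 = k1^2 + k2^2, |Phi|^2 = |A|^2 - H^2/2.\<close>
definition mean_curv :: "(real \<Rightarrow> real) \<Rightarrow> (real \<Rightarrow> real) \<Rightarrow> real \<Rightarrow> real" where
  "mean_curv x z s = k1 x z s + k2 x z s"

definition normA_sq :: "(real \<Rightarrow> real) \<Rightarrow> (real \<Rightarrow> real) \<Rightarrow> real \<Rightarrow> real" where
  "normA_sq x z s = (k1 x z s)\<^sup>2 + (k2 x z s)\<^sup>2"

definition normPhi_sq :: "(real \<Rightarrow> real) \<Rightarrow> (real \<Rightarrow> real) \<Rightarrow> real \<Rightarrow> real" where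
  "normPhi_sq x z s = normA_sq x z s - (mean_curv x z s)\<^sup>2 / 2"

end

theory Submission
  imports Defs
begin

text \<open>
  With \<open>p = \<langle>x, N\<rangle>\<close>, the defect \<open>(2 + H p)\<^sup>2 / 2 - |\<Phi>|\<^sup>2 p\<^sup>2\<close> factors as
  \<open>2 (1 + k\<^sub>1 p) (1 + k\<^sub>2 p)\<close>. Hypothesis (c) is exactly \<open>1 + k\<^sub>2 p \<ge> 0\<close>; differentiating
  the arc length condition gives \<open>x' x'' + z' z'' = 0\<close>, so \<open>k\<^sub>1 = -x''/z'\<close> where \<open>z' \<noteq> 0\<close>
  and \<open>x'' = 0\<close>, \<open>x'\<^sup>2 = 1\<close> where \<open>z' = 0\<close>; in both cases (a) resp. (b) is exactly
  \<open>1 + k\<^sub>1 p \<ge> 0\<close>.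
\<close>

definition support_fun :: "(real \<Rightarrow> real) \<Rightarrow> (real \<Rightarrow> real) \<Rightarrow> real \<Rightarrow> real" where
  "support_fun x z s = z s * deriv x s - x s * deriv z s"

lemma traceless_bound_factorization:
  fixes k1 k2 p :: real
  shows "1/2 * (2 + (k1 + k2) * p)\<^sup>2 - (k1\<^sup>2 + k2\<^sup>2 - (k1 + k2)\<^sup>2 / 2) * p\<^sup>2
           = 2 * ((1 + k1 * p) * (1 + k2 * p))"
  by (simp add: power2_eq_square algebra_simps)

lemma traceless_bound_if_nonneg:
  fixes k1 k2 p :: real
  assumes "0 \<le> 1 + k1 * p" "0 \<le> 1 + k2 * p"
  shows "(k1\<^sup>2 + k2\<^sup>2 - (k1 + k2)\<^sup>2 / 2) * p\<^sup>2 \<le> 1/2 * (2 + (k1 + k2) * p)\<^sup>2"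
  using traceless_bound_factorization[of k1 k2 p] mult_nonneg_nonneg[OF assms] by linarith

lemma inner_rev_surf_rev_normal:
  "inner (rev_surf x z s \<theta>) (rev_normal x z s \<theta>) = support_fun x z s"
proof -
  have "cos \<theta> * (cos \<theta> * (x s * deriv z s)) + sin \<theta> * (sin \<theta> * (x s * deriv z s))
          = x s * deriv z s"
    using sin_cos_squared_add3[of \<theta>] by (simp only: distrib_right[symmetric] mult.assoc[symmetric])
  then show ?thesis
    unfolding rev_surf_def rev_normal_def support_fun_def
    by (simp add: inner_Pair algebra_simps)
qed

lemma smooth_on_has_deriv_deriv:
  assumes "smooth_on S f" "s \<in> S"
  shows "(deriv f has_field_derivative deriv (deriv f) s) (at s)"
proof -
  have "((deriv ^^ 1) f) differentiable (at s)"
    using assms unfolding smooth_on_def by blast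
  then show ?thesis by (simp add: DERIV_deriv_iff_real_differentiable)
qed

lemma unit_speed_acceleration_orthogonal:
  assumes "open I" "s \<in> I" "smooth_on I x" "smooth_on I z"
    and "\<forall>t\<in>I. (deriv x t)\<^sup>2 + (deriv z t)\<^sup>2 = 1"
  shows "deriv x s * deriv (deriv x) s + deriv z s * deriv (deriv z) s = 0"
proof -
  let ?speed = "\<lambda>t. (deriv x t)\<^sup>2 + (deriv z t)\<^sup>2"
  have "(?speed has_field_derivative
          2 * deriv x s * deriv (deriv x) s + 2 * deriv z s * deriv (deriv z) s) (at s)"
    by (auto intro!: derivative_eq_intros smooth_on_has_deriv_deriv assms)
  moreover have "(?speed has_field_derivative 0) (at s)"
    by (rule has_field_derivative_transform_within_open[OF DERIV_const \<open>open I\<close> \<open>s \<in> I\<close>])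
       (use assms(5) in auto)
  ultimately show ?thesis
    using DERIV_unique by fastforce
qed

lemma parallel_curvature_support_nonneg:
  assumes "(deriv x s)\<^sup>2 + (deriv z s)\<^sup>2 = 1" "x s > 0"
    and "- x s * (deriv x s)\<^sup>2 \<le> deriv z s * deriv x s * z s"
  shows "0 \<le> 1 + k2 x z s * support_fun x z s"
proof -
  have "x s = x s * ((deriv x s)\<^sup>2 + (deriv z s)\<^sup>2)"
    using assms(1) by simp
  then have "1 + k2 x z s * support_fun x z s
               = (x s * (deriv x s)\<^sup>2 + deriv z s * deriv x s * z s) / x s"
    using assms(2) unfolding k2_def support_fun_def
    by (simp add: field_simps power2_eq_square)
  then show ?thesis
    using assms(2,3) by simp
qed

lemma meridian_curvature_support_nonneg:
  assumes unit: "(deriv x s)\<^sup>2 + (deriv z s)\<^sup>2 = 1"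
    and orth: "deriv x s * deriv (deriv x) s + deriv z s * deriv (deriv z) s = 0"
    and a: "deriv z s \<noteq> 0 \<Longrightarrow> -1 \<le> deriv (deriv x) s * (x s - deriv x s / deriv z s * z s)"
    and b: "deriv z s = 0 \<Longrightarrow> -1 \<le> z s * deriv (deriv z) s"
  shows "0 \<le> 1 + k1 x z s * support_fun x z s"
proof (cases "deriv z s = 0")
  case True
  then have "(deriv x s)\<^sup>2 = 1" and "deriv (deriv x) s = 0"
    using unit orth by (auto simp: power2_eq_1_iff)
  then have "1 + k1 x z s * support_fun x z s = 1 + z s * deriv (deriv z) s"
    using True unfolding k1_def support_fun_def by (simp add: power2_eq_square algebra_simps)
  then show ?thesis using b True by simp
next
  case False
  have "k1 x z s = - deriv (deriv x) s / deriv z s"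
  proof -
    have "deriv (deriv z) s = - deriv x s * deriv (deriv x) s / deriv z s"
      using orth False by (simp add: field_simps)
    then have "k1 x z s = - deriv (deriv x) s * ((deriv x s)\<^sup>2 + (deriv z s)\<^sup>2) / deriv z s"
      using False unfolding k1_def by (simp add: field_simps power2_eq_square)
    then show ?thesis using unit by simp
  qed
  then have "1 + k1 x z s * support_fun x z s
               = 1 + deriv (deriv x) s * (x s - deriv x s / deriv z s * z s)"
    using False unfolding support_fun_def by (simp add: field_simps)
  then show ?thesis using a False by simp
qed

theorem lemma3p1:
  fixes x z :: "real \<Rightarrow> real" and I :: "real set"
  assumes I: "is_interval I" "open I"
    and smooth: "smooth_on I x" "smooth_on I z"
    and arclen: "\<forall>s\<in>I. (deriv x s)\<^sup>2 + (deriv z s)\<^sup>2 = 1"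
    and xpos: "\<forall>s\<in>I. x s > 0"
    and a: "\<forall>s\<in>I. deriv z s \<noteq> 0 \<longrightarrow>
              -1 \<le> deriv (deriv x) s * (x s - deriv x s / deriv z s * z s)"
    and b: "\<forall>s\<in>I. deriv z s = 0 \<longrightarrow> -1 \<le> z s * deriv (deriv z) s"
    and c: "\<forall>s\<in>I. - x s * (deriv x s)\<^sup>2 \<le> deriv z s * deriv x s * z s"
  shows "\<forall>s\<in>I. \<forall>\<theta>.
     normPhi_sq x z s * (inner (rev_surf x z s \<theta>) (rev_normal x z s \<theta>))\<^sup>2
       \<le> 1/2 * (2 + mean_curv x z s * inner (rev_surf x z s \<theta>) (rev_normal x z s \<theta>))\<^sup>2"
proof (intro ballI allI)
  fix s \<theta> assume s: "s \<in> I"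
  have orth: "deriv x s * deriv (deriv x) s + deriv z s * deriv (deriv z) s = 0"
    using unit_speed_acceleration_orthogonal[OF I(2) s smooth arclen] .
  have "0 \<le> 1 + k1 x z s * support_fun x z s"
    using meridian_curvature_support_nonneg[OF _ orth] arclen a b s by blast
  moreover have "0 \<le> 1 + k2 x z s * support_fun x z s"
    using parallel_curvature_support_nonneg arclen xpos c s by blast
  ultimately show "normPhi_sq x z s * (inner (rev_surf x z s \<theta>) (rev_normal x z s \<theta>))\<^sup>2
       \<le> 1/2 * (2 + mean_curv x z s * inner (rev_surf x z s \<theta>) (rev_normal x z s \<theta>))\<^sup>2"
    unfolding inner_rev_surf_rev_normal normPhi_sq_def normA_sq_def mean_curv_def
    by (rule traceless_bound_if_nonneg)
qed

end
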